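(* Let $f:\mathbb{R}^{m}\to\overline{\mathbb{R}}:=\mathbb{R}\cup\{\infty\}$ be a proper convex function that is $\mathcal{C}^{2}$-cone reducible and that is Lipschitz continuous around each point of $\operatorname{dom}f$. Let $\bar{x}\in\operatorname{dom}f$ and $\bar{u}\in\partial f(\bar{x})$. Then the subgradient mapping $\partial f$ is calm at $\bar{x}$ for $\bar{u}$.
   Context: $\partial f$ denotes the subdifferential of the convex function $f$. A closed convex set $C\subset\mathbb{R}^{m}$ is $\mathcal{C}^{2}$-cone reducible at $x\in C$ if there exist a neighborhood $U$ of $x$, a set $K\subset\mathbb{R}^{p}$ and a $\mathcal{C}^{2}$-smooth mapping $\Xi:U\to\mathbb{R}^{p}$ with surjective derivative at $x$ such that $C\cap U=\{x'\in U\mid \Xi(x')\in K\}$, $\Xi(x)=0$, and $K-\Xi(x)$ is a pointed closed convex cone. A lower semicontinuous convex function $f$ is $\mathcal{C}^{2}$-cone reducible at $x\in\operatorname{dom}f$ if its epigraph $\operatorname{epi}f=\{(x,\alpha)\mid f(x)\le\alpha\}$ is $\mathcal{C}^{2}$-cone reducible at $(x,f(x))$; $f$ is called $\mathcal{C}^{2}$-cone reducible if this holds at every point of $\operatorname{dom}f$. A set-valued mapping $S:\mathbb{R}^{n}\rightrightarrows\mathbb{R}^{m}$ is calm at $\bar z$ for $\bar w\in S(\bar z)$ if there exist $\kappa\ge0$ and $\varepsilon,\delta>0$ such that $S(z)\cap\mathbb{B}(\bar w,\delta)\subset S(\bar z)+\kappa\|z-\bar z\|\mathbb{B}_{\mathbb{R}^{m}}$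 for all $z\in\mathbb{B}(\bar z,\varepsilon)$, where $\mathbb{B}(a,r)$ is the closed ball of radius $r$ about $a$ and $\mathbb{B}_{\mathbb{R}^m}$ the closed unit ball. *)

theory Defs
  imports "HOL-Analysis.Analysis"
begin

text \<open>Extended-real-valued functions f : R^m -> R \<union> {+\<infinity>} are modelled as
  functions into ereal that never take the value -\<infinity> (part of properness).\<close>

definition dom_f :: "('a \<Rightarrow> ereal) \<Rightarrow> 'a set" where
  "dom_f f = {x. f x < \<infinity>}"

definition epi :: "('a \<Rightarrow> ereal) \<Rightarrow> ('a \<times> real) set" where
  "epi f = {(x, \<alpha>). f x \<le> ereal \<alpha>}"

definition proper_fun :: "('a \<Rightarrow> ereal) \<Rightarrow> bool" where
  "proper_fun f \<longleftrightarrow> (\<forall>x. f x \<noteq> -\<infinity>) \<and> (\<exists>x. f x < \<infinity>)"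

definition convex_fun :: "('a::real_vector \<Rightarrow> ereal) \<Rightarrow> bool" where
  "convex_fun f \<longleftrightarrow> convex (epi f)"

definition lsc_fun :: "('a::topological_space \<Rightarrow> ereal) \<Rightarrow> bool" where
  "lsc_fun f \<longleftrightarrow> closed (epi f)"

definition subdiff :: "('a::real_inner \<Rightarrow> ereal) \<Rightarrow> 'a \<Rightarrow> 'a set" where
  "subdiff f x = {v. x \<in> dom_f f \<and> (\<forall>y. f x + ereal (v \<bullet> (y - x)) \<le> f y)}"

definition C2_on :: "'a::euclidean_space set \<Rightarrow> ('a \<Rightarrow> 'b::euclidean_space) \<Rightarrow> bool" where
  "C2_on U \<Xi> \<longleftrightarrow> (\<exists>(D1 :: 'a \<Rightarrow> ('a \<Rightarrow>\<^sub>L 'b)) (D2 :: 'a \<Rightarrow> ('a \<Rightarrow>\<^sub>L ('a \<Rightarrow>\<^sub>L 'b))).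
      (\<forall>y\<in>U. (\<Xi> has_derivative blinfun_apply (D1 y)) (at y)
             \<and> (D1 has_derivative blinfun_apply (D2 y)) (at y))
      \<and> continuous_on U D2)"

text \<open>The target space R^p
  is represented as a linear subspace L of the ambient space (any p with a
  surjective derivative satisfies p \<le> dim, and R^p is isometric to such an L).\<close>
definition C2_cone_reducible_at :: "'a::euclidean_space set \<Rightarrow> 'a \<Rightarrow> bool" where
  "C2_cone_reducible_at C x \<longleftrightarrow>
     (\<exists>U L K (\<Xi> :: 'a \<Rightarrow> 'a).
        open U \<and> x \<in> U \<and> subspace L \<and> \<Xi> ` U \<subseteq> L \<and> K \<subseteq> L \<and>
        C2_on U \<Xi> \<and> range (frechet_derivative \<Xi> (at x)) = L \<and>
        C \<inter> U = {x' \<in> U. \<Xi> x' \<in> K} \<and> \<Xi> x = 0 \<and>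
        closed K \<and> convex K \<and> cone K \<and> K \<inter> uminus ` K = {0})"

definition C2_cone_reducible_fun :: "('a::euclidean_space \<Rightarrow> ereal) \<Rightarrow> bool" where
  "C2_cone_reducible_fun f \<longleftrightarrow> lsc_fun f \<and> convex_fun f \<and>
     (\<forall>x \<in> dom_f f. C2_cone_reducible_at (epi f) (x, real_of_ereal (f x)))"

definition locally_lipschitz_on_dom :: "('a::metric_space \<Rightarrow> ereal) \<Rightarrow> bool" where
  "locally_lipschitz_on_dom f \<longleftrightarrow>
     (\<forall>x \<in> dom_f f. \<exists>\<epsilon>>0. \<exists>L. ball x \<epsilon> \<subseteq> dom_f f \<and>
        L-lipschitz_on (ball x \<epsilon>) (\<lambda>y. real_of_ereal (f y)))"

definition calm_at :: "('a::metric_space \<Rightarrow> 'b::real_normed_vector set) \<Rightarrow> 'a \<Rightarrow> 'b \<Rightarrow> bool" where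
  "calm_at S z w \<longleftrightarrow> w \<in> S z \<and>
     (\<exists>\<kappa>\<ge>0. \<exists>\<epsilon>>0. \<exists>\<delta>>0. \<forall>z' \<in> cball z \<epsilon>.
        S z' \<inter> cball w \<delta> \<subseteq> {s + t | s t. s \<in> S z \<and> norm t \<le> \<kappa> * dist z' z})"

end

theory Submission
  imports Defs
begin

(* A subgradient u of f at x is the same as a normal (u, -1) to epi f at (x, f x), and
  by local Lipschitz continuity the point (x, f x) moves Lipschitz-continuously with x.
  It therefore suffices to show that normals to the reducible convex set C = epi f satisfy an
  outer Lipschitz estimate at cb = (xbar, f xbar): a normal n at c near cb lies within
  \<kappa> |n| |c - cb| of a normal at cb, which is then rescaled back to a subgradient at xbar.
  For the estimate, the inverse function theorem (applied to the reduction map \<Xi>, augmented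
  to a local diffeomorphism) writes n = D\<Xi>(c)\<^sup>* \<mu> with \<mu> in the polar cone of K and
  |\<mu>| \<le> \<beta> |n|. Then D\<Xi>(cb)\<^sup>* \<mu> is normal at cb, and it differs from n by at most
  |D\<Xi>(cb) - D\<Xi>(c)| |\<mu>| = O(|c - cb|), as \<Xi> is C\<^sup>2. *)

definition normal_cone :: "'a::real_inner set \<Rightarrow> 'a \<Rightarrow> 'a set" where
  "normal_cone C c = {n. \<forall>c'\<in>C. n \<bullet> (c' - c) \<le> 0}"

lemma subspace_linear_projection_exists:
  fixes L :: "'a::euclidean_space set"
  assumes L: "subspace L"
  obtains p where "linear p" "\<And>y. p y \<in> L" "\<And>y. y \<in> L \<Longrightarrow> p y = y"
proof -
  have "\<exists>a. a \<in> L \<and> (\<forall>l\<in>L. (x - a) \<bullet> l = 0)" for x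
  proof -
    obtain a z where "a \<in> span L" "\<And>w. w \<in> span L \<Longrightarrow> orthogonal z w" "x = a + z"
      using orthogonal_subspace_decomp_exists by blast
    then show ?thesis using L span_eq_iff[of L] span_base[of _ L]
      by (metis add_diff_cancel_left' orthogonal_def)
  qed
  then obtain p where p: "\<And>x. p x \<in> L" "\<And>x l. l \<in> L \<Longrightarrow> (x - p x) \<bullet> l = 0"
    by metis
  have unique: "p x = a" if "a \<in> L" "\<And>l. l \<in> L \<Longrightarrow> (x - a) \<bullet> l = 0" for x a
  proof -
    have pa: "p x - a \<in> L" using L p(1) that(1) subspace_diff by blast
    have "(p x - a) \<bullet> (p x - a) = ((x - a) - (x - p x)) \<bullet> (p x - a)"
      by (simp add: algebra_simps)
    also have "\<dots> = 0" using that(2)[OF pa] p(2)[OF pa] by (simp add: inner_diff_left)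
    finally show ?thesis by simp
  qed
  have "linear p"
  proof (rule linearI)
    fix x y
    show "p (x + y) = p x + p y"
    proof (rule unique)
      show "p x + p y \<in> L" using L p(1) subspace_add by blast
      fix l assume "l \<in> L"
      then show "(x + y - (p x + p y)) \<bullet> l = 0"
        using p(2)[of l x] p(2)[of l y]
        by (simp add: algebra_simps inner_add_left inner_diff_left)
    qed
  next
    fix c x
    show "p (c *\<^sub>R x) = c *\<^sub>R p x"
    proof (rule unique)
      show "c *\<^sub>R p x \<in> L" using L p(1) subspace_scale by blast
      fix l assume "l \<in> L"
      then show "(c *\<^sub>R x - c *\<^sub>R p x) \<bullet> l = 0"
        using p(2)[of l x]
        by (metis inner_scaleR_left mult_zero_right scaleR_right_diff_distrib)
    qed
  qed
  moreover have "p y = y" if "y \<in> L" for y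
    using unique[OF that] by simp
  ultimately show ?thesis using p(1) that by blast
qed

lemma local_max_on_convex_derivative_nonpos:
  fixes g :: "'a::real_normed_vector \<Rightarrow> real"
  assumes g': "(g has_derivative g') (at k)"
    and V: "open V" "k \<in> V" and Q: "convex Q" "k \<in> Q" "q \<in> Q"
    and max: "\<And>y. y \<in> V \<Longrightarrow> y \<in> Q \<Longrightarrow> g y \<le> g k"
  shows "g' (q - k) \<le> 0"
proof -
  define h where "h t = g (k + t *\<^sub>R (q - k))" for t :: real
  have "((\<lambda>t. k + t *\<^sub>R (q - k)) has_derivative (\<lambda>t. t *\<^sub>R (q - k))) (at 0)"
    by (auto intro!: derivative_eq_intros)
  moreover have "(g has_derivative g') (at (k + 0 *\<^sub>R (q - k)))"
    using g' by simp
  ultimately have "(h has_derivative (\<lambda>t. g' (t *\<^sub>R (q - k)))) (at 0)"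
    unfolding h_def by (rule has_derivative_compose)
  moreover have "(\<lambda>t. g' (t *\<^sub>R (q - k))) = (*) (g' (q - k))"
    using has_derivative_linear[OF g'] by (auto simp: linear_scale)
  ultimately have "(h has_field_derivative g' (q - k)) (at 0 within {0<..})"
    by (simp add: has_field_derivative_def has_derivative_at_withinI)
  then have lim: "((\<lambda>t. (h t - h 0) / (t - 0)) \<longlongrightarrow> g' (q - k)) (at_right 0)"
    using has_field_derivative_iff by blast
  have "((\<lambda>t. k + t *\<^sub>R (q - k)) \<longlongrightarrow> k) (at_right 0)"
    by (auto intro!: tendsto_eq_intros)
  then have "eventually (\<lambda>t. k + t *\<^sub>R (q - k) \<in> V) (at_right 0)"
    using V topological_tendstoD by blast
  moreover have "eventually (\<lambda>t. 0 < t \<and> t < 1) (at_right (0::real))"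
    by (rule eventually_at_rightI[of 0 1]) auto
  ultimately have "eventually (\<lambda>t. (h t - h 0) / (t - 0) \<le> 0) (at_right 0)"
  proof eventually_elim
    case (elim t)
    have "k + t *\<^sub>R (q - k) = (1 - t) *\<^sub>R k + t *\<^sub>R q" by (simp add: algebra_simps)
    then have "k + t *\<^sub>R (q - k) \<in> Q" using convexD[OF Q, of "1 - t" t] elim by simp
    then show ?case using max elim by (simp add: h_def divide_nonpos_pos)
  qed
  then show ?thesis using tendsto_upperbound[OF lim] by simp
qed

lemma inj_linear_adjoint_augmentation:
  fixes A p :: "'a::euclidean_space \<Rightarrow> 'a"
  assumes A: "linear A" and p: "linear p" "\<And>y. p y \<in> range A" "\<And>y. y \<in> range A \<Longrightarrow> p y = y"
  shows "inj (\<lambda>q. (A (fst q) + (snd q - p (snd q)), fst q + adjoint A (snd q)))"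
proof -
  let ?T = "\<lambda>q. (A (fst q) + (snd q - p (snd q)), fst q + adjoint A (snd q))"
  have lin: "linear ?T"
  proof (rule linearI)
    fix x y :: "'a \<times> 'a"
    show "?T (x + y) = ?T x + ?T y"
      using linear_add[OF A] linear_add[OF p(1)] linear_add[OF adjoint_linear[OF A]]
      by (simp add: algebra_simps)
  next
    fix c and x :: "'a \<times> 'a"
    show "?T (c *\<^sub>R x) = c *\<^sub>R ?T x"
      using linear_scale[OF A] linear_scale[OF p(1)] linear_scale[OF adjoint_linear[OF A]]
      by (simp add: scaleR_right_diff_distrib scaleR_right_distrib)
  qed
  moreover have "\<forall>q. ?T q = 0 \<longrightarrow> q = 0"
  proof (intro allI impI)
    fix q assume "?T q = 0"
    have eq1: "A (fst q) + (snd q - p (snd q)) = 0" and eq2: "fst q + adjoint A (snd q) = 0"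
      using \<open>?T q = 0\<close> by (simp_all add: prod_eq_iff)
    have "p (A (fst q) + (snd q - p (snd q))) = A (fst q)"
      using p by (simp add: linear_add linear_diff)
    then have A0: "A (fst q) = 0" using eq1 p(1) by (simp add: linear_0)
    then have "snd q = p (snd q)" using eq1 by simp
    then obtain d where d: "snd q = A d" using p(2) by (metis rangeE)
    have "fst q = - adjoint A (snd q)" using eq2 by (simp add: eq_neg_iff_add_eq_0)
    then have "A (adjoint A (snd q)) = 0" using A0 A by (simp add: linear_neg)
    then have "adjoint A (snd q) = 0"
      using adjoint_works[OF A, of "adjoint A (snd q)" "snd q"] by simp
    moreover have "snd q \<bullet> snd q = d \<bullet> adjoint A (snd q)"
      using adjoint_works[OF A] d by simp
    ultimately show "q = 0" using eq2 by (simp add: prod_eq_iff)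
  qed
  ultimately show ?thesis using linear_injective_0[OF lin] by blast
qed

lemma C2_on_derivative_locally_lipschitz:
  fixes \<Xi> :: "'a::euclidean_space \<Rightarrow> 'b::euclidean_space"
  assumes "C2_on U \<Xi>" "open U" "x \<in> U"
  obtains D r M where "\<And>y. y \<in> U \<Longrightarrow> (\<Xi> has_derivative blinfun_apply (D y)) (at y)"
    "continuous_on U D" "r > 0" "M \<ge> 0" "\<And>y. y \<in> ball x r \<Longrightarrow> norm (D y - D x) \<le> M * norm (y - x)"
proof -
  obtain D D2 where D: "\<And>y. y \<in> U \<Longrightarrow> (\<Xi> has_derivative blinfun_apply (D y)) (at y)"
    and D2: "\<And>y. y \<in> U \<Longrightarrow> (D has_derivative blinfun_apply (D2 y)) (at y)" "continuous_on U D2"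
    using assms(1) unfolding C2_on_def by blast
  have "continuous_on U D"
    using D2(1) assms(2) by (meson continuous_on_eq_continuous_at has_derivative_continuous)
  obtain r where r: "r > 0" "ball x r \<subseteq> U" "\<And>y. y \<in> ball x r \<Longrightarrow> dist (D2 y) (D2 x) < 1"
  proof -
    have "continuous (at x) D2" using D2(2) assms(2,3) continuous_on_eq_continuous_at by blast
    then obtain d1 where "d1 > 0" "\<And>y. dist y x < d1 \<Longrightarrow> dist (D2 y) (D2 x) < 1"
      unfolding continuous_at_eps_delta by (meson zero_less_one)
    moreover obtain d2 where "d2 > 0" "ball x d2 \<subseteq> U" using assms(2,3) openE by blast
    ultimately show ?thesis
      by (intro that[of "min d1 d2"]) (auto simp: dist_commute)
  qed
  have "norm (D y - D x) \<le> (norm (D2 x) + 1) * norm (y - x)" if "y \<in> ball x r" for y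
  proof (rule differentiable_bound[of "ball x r" D "\<lambda>y. blinfun_apply (D2 y)"])
    show "(D has_derivative blinfun_apply (D2 z)) (at z within ball x r)" if "z \<in> ball x r" for z
      using r(2) that by (blast intro: has_derivative_at_withinI D2(1))
    show "onorm (blinfun_apply (D2 z)) \<le> norm (D2 x) + 1" if "z \<in> ball x r" for z
    proof -
      have "norm (D2 z) \<le> norm (D2 x) + dist (D2 z) (D2 x)"
        by (metis dist_norm norm_triangle_sub)
      then show ?thesis using r(3)[OF that] by (simp add: norm_blinfun.rep_eq[symmetric])
    qed
  qed (use that r in auto)
  with D \<open>continuous_on U D\<close> r(1) show ?thesis
    by (intro that[of D r "norm (D2 x) + 1"]) auto
qed

lemma subdiff_imp_normal_cone_epi:
  assumes "u \<in> subdiff f x" "f x = ereal r"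
  shows "(u, -1) \<in> normal_cone (epi f) (x, r)"
  unfolding normal_cone_def
proof safe
  fix y \<alpha> assume "(y, \<alpha>) \<in> epi f"
  then have "f y \<le> ereal \<alpha>" by (simp add: epi_def)
  moreover have "f x + ereal (u \<bullet> (y - x)) \<le> f y" using assms(1) unfolding subdiff_def by blast
  ultimately have "r + u \<bullet> (y - x) \<le> \<alpha>"
    using assms(2) by (metis order_trans plus_ereal.simps(1) ereal_less_eq(3))
  then show "(u, -1) \<bullet> ((y, \<alpha>) - (x, r)) \<le> 0" by simp
qed

lemma subdiff_near_normal_cone_epi:
  assumes f: "proper_fun f" "f x = ereal r"
    and w: "w \<in> normal_cone (epi f) (x, r)" "norm (w - (u, -1)) \<le> \<beta>" and "\<beta> \<le> 1/2"
  shows "\<exists>v\<in>subdiff f x. norm (u - v) \<le> 2 * (norm u + 1) * \<beta>"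
proof -
  obtain u' \<tau> where w_eq: "w = (u', -\<tau>)" by (metis minus_minus surj_pair)
  have u': "norm (u' - u) \<le> \<beta>" and \<tau>: "\<bar>1 - \<tau>\<bar> \<le> \<beta>"
    using norm_fst_le[where x = "u' - u" and y = "1 - \<tau>"]
      norm_snd_le[where x = "u' - u" and y = "1 - \<tau>"] w(2)
    by (simp_all add: w_eq)
  then have \<tau>_pos: "\<tau> \<ge> 1/2" using \<open>\<beta> \<le> 1/2\<close> by linarith
  have "u' /\<^sub>R \<tau> \<in> subdiff f x"
    unfolding subdiff_def
  proof (intro CollectI conjI allI)
    show "x \<in> dom_f f" using f(2) by (simp add: dom_f_def)
    fix y
    show "f x + ereal ((u' /\<^sub>R \<tau>) \<bullet> (y - x)) \<le> f y"
    proof (cases "f y")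
      case (real b)
      then have "(y, b) \<in> epi f" by (simp add: epi_def)
      then have "(u', -\<tau>) \<bullet> ((y, b) - (x, r)) \<le> 0"
        using w(1) unfolding normal_cone_def w_eq by blast
      then have "u' \<bullet> (y - x) \<le> \<tau> * (b - r)" by (simp add: algebra_simps)
      then have "(u' /\<^sub>R \<tau>) \<bullet> (y - x) \<le> b - r" using \<tau>_pos by (simp add: field_simps)
      then show ?thesis by (simp add: f(2) real)
    qed (use f in \<open>auto simp: proper_fun_def\<close>)
  qed
  moreover have "norm (u - u' /\<^sub>R \<tau>) \<le> 2 * (norm u + 1) * \<beta>"
  proof -
    have "inverse \<tau> = 1 - (\<tau> - 1) / \<tau>" using \<tau>_pos by (simp add: field_simps)
    then have "u' /\<^sub>R \<tau> = u' - ((\<tau> - 1) / \<tau>) *\<^sub>R u'" by (simp add: scaleR_left_diff_distrib)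
    then have "u - u' /\<^sub>R \<tau> = (u - u') + ((\<tau> - 1) / \<tau>) *\<^sub>R u'" by simp
    then have "norm (u - u' /\<^sub>R \<tau>) \<le> norm (u' - u) + (\<bar>\<tau> - 1\<bar> / \<tau>) * norm u'"
      using \<tau>_pos by (metis norm_minus_commute norm_scaleR norm_triangle_ineq abs_divide abs_of_pos
          order_less_le_trans zero_less_divide_1_iff zero_less_numeral)
    also have "\<dots> \<le> \<beta> + (2 * \<beta>) * (norm u + 1/2)"
    proof (intro add_mono mult_mono u')
      have "\<beta> \<le> \<beta> * (\<tau> * 2)"
        using \<tau> \<tau>_pos mult_left_mono[of 1 "\<tau> * 2" \<beta>] by simp
      then show "\<bar>\<tau> - 1\<bar> / \<tau> \<le> 2 * \<beta>" using \<tau> \<tau>_pos by (simp add: field_simps abs_minus_commute)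
      show "norm u' \<le> norm u + 1/2" using u' \<open>\<beta> \<le> 1/2\<close> norm_triangle_sub[of u' u] by simp
    qed (use \<tau> in auto)
    finally show ?thesis by (simp add: algebra_simps)
  qed
  ultimately show ?thesis by blast
qed

locale C2_cone_reduction =
  fixes C :: "'a::euclidean_space set" and cb :: 'a and U K :: "'a set"
    and \<Xi> :: "'a \<Rightarrow> 'a" and D :: "'a \<Rightarrow> 'a \<Rightarrow>\<^sub>L 'a" and p :: "'a \<Rightarrow> 'a"
  assumes convex_C: "convex C" and cb_in_C: "cb \<in> C"
    and open_U: "open U" and cb_in_U: "cb \<in> U"
    and has_derivative_\<Xi>: "\<And>y. y \<in> U \<Longrightarrow> (\<Xi> has_derivative blinfun_apply (D y)) (at y)"
    and continuous_on_D: "continuous_on U D"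
    and \<Xi>_range: "\<Xi> ` U \<subseteq> range (D cb)" and K_range: "K \<subseteq> range (D cb)"
    and C_local: "C \<inter> U = {y \<in> U. \<Xi> y \<in> K}" and \<Xi>_cb: "\<Xi> cb = 0"
    and convex_K: "convex K" and cone_K: "cone K"
    and linear_p: "linear p" and p_range: "\<And>y. p y \<in> range (D cb)"
    and p_id: "\<And>y. y \<in> range (D cb) \<Longrightarrow> p y = y"
begin

definition aug_deriv :: "('a \<Rightarrow>\<^sub>L 'a) \<Rightarrow> 'a \<times> 'a \<Rightarrow> 'a \<times> 'a" where
  "aug_deriv X = (\<lambda>q. (X (fst q) + (snd q - p (snd q)), fst q + adjoint (D cb) (snd q)))"

(* The extra terms make the derivative injective at (cb, 0) without changing which points are
   mapped into (p -` K) \<times> UNIV, so the inverse function theorem applies. *)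
definition aug_map :: "'a \<times> 'a \<Rightarrow> 'a \<times> 'a" where
  "aug_map q = (\<Xi> (fst q) + (snd q - p (snd q)), fst q - cb + adjoint (D cb) (snd q))"

lemma linear_adjoint_D: "linear (adjoint (blinfun_apply (D cb)))"
  by (simp add: adjoint_linear blinfun.bounded_linear_right bounded_linear.linear)

lemma inner_adjoint_D: "x \<bullet> adjoint (D cb) y = D cb x \<bullet> y"
  by (intro adjoint_works bounded_linear.linear blinfun.bounded_linear_right)

lemma linear_aug_deriv: "linear (aug_deriv X)"
proof (rule linearI)
  fix x y :: "'a \<times> 'a"
  show "aug_deriv X (x + y) = aug_deriv X x + aug_deriv X y"
    using linear_add[OF linear_p] linear_add[OF linear_adjoint_D]
    by (simp add: aug_deriv_def blinfun.add_right algebra_simps)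
next
  fix c and x :: "'a \<times> 'a"
  show "aug_deriv X (c *\<^sub>R x) = c *\<^sub>R aug_deriv X x"
    using linear_scale[OF linear_p] linear_scale[OF linear_adjoint_D]
    by (simp add: aug_deriv_def blinfun.scaleR_right scaleR_right_diff_distrib scaleR_right_distrib)
qed

lemma blinfun_apply_Blinfun_aug_deriv: "blinfun_apply (Blinfun (aug_deriv X)) = aug_deriv X"
  using linear_aug_deriv linear_conv_bounded_linear bounded_linear_Blinfun_apply by metis

lemma norm_aug_deriv_diff_le: "norm (aug_deriv X q - aug_deriv Y q) \<le> norm (X - Y) * norm q"
proof -
  have "norm (aug_deriv X q - aug_deriv Y q) = norm (blinfun_apply (X - Y) (fst q))"
    by (simp add: aug_deriv_def blinfun.diff_left norm_Pair)
  also have "\<dots> \<le> norm (X - Y) * norm (fst q)" by (rule norm_blinfun)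
  also have "\<dots> \<le> norm (X - Y) * norm q"
    by (intro mult_left_mono norm_fst_le[of "fst q" "snd q", simplified]) simp
  finally show ?thesis .
qed

lemma inj_aug_deriv_base: "inj (aug_deriv (D cb))"
  unfolding aug_deriv_def
  by (intro inj_linear_adjoint_augmentation linear_p p_range p_id)
    (simp_all add: blinfun.bounded_linear_right bounded_linear.linear)

lemma aug_map_has_derivative:
  assumes "fst q \<in> U"
  shows "(aug_map has_derivative aug_deriv (D (fst q))) (at q)"
proof -
  have linear_snd: "((\<lambda>q. T (snd q)) has_derivative (\<lambda>h. T (snd h))) (at q)"
    if "linear T" for T :: "'a \<Rightarrow> 'a"
    using that bounded_linear.has_derivative[of T, OF _ has_derivative_snd[OF has_derivative_ident]]
    by (simp add: linear_conv_bounded_linear)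
  have fst: "((\<lambda>q. fst q) has_derivative (\<lambda>h. fst h)) (at q)"
    and snd: "((\<lambda>q. snd q) has_derivative (\<lambda>h. snd h)) (at q)"
    by (rule has_derivative_fst[OF has_derivative_ident]
        has_derivative_snd[OF has_derivative_ident])+
  have "((\<lambda>q. \<Xi> (fst q)) has_derivative (\<lambda>h. D (fst q) (fst h))) (at q)"
    using has_derivative_compose[OF fst has_derivative_\<Xi>[OF assms]] .
  then have "(aug_map has_derivative (\<lambda>h. (D (fst q) (fst h) + (snd h - p (snd h)),
      fst h - 0 + adjoint (D cb) (snd h)))) (at q)"
    unfolding aug_map_def[abs_def]
    by (intro has_derivative_Pair has_derivative_add has_derivative_diff has_derivative_const
        fst snd linear_snd linear_p linear_adjoint_D)
  then show ?thesis by (simp add: aug_deriv_def)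
qed

lemma aug_map_mem_iff:
  assumes "fst q \<in> U"
  shows "aug_map q \<in> (p -` K) \<times> UNIV \<longleftrightarrow> fst q \<in> C"
proof -
  have "\<Xi> (fst q) \<in> range (D cb)" using assms \<Xi>_range by blast
  then have "p (fst (aug_map q)) = \<Xi> (fst q)"
    using p_id p_range linear_add[OF linear_p] linear_diff[OF linear_p] by (simp add: aug_map_def)
  then have "aug_map q \<in> (p -` K) \<times> UNIV \<longleftrightarrow> \<Xi> (fst q) \<in> K" by (simp add: mem_Times_iff)
  also have "\<dots> \<longleftrightarrow> fst q \<in> C" using assms C_local by blast
  finally show ?thesis .
qed

lemma aug_map_local_inverse:
  obtains W V H where "open W" "W \<subseteq> U \<times> UNIV" "(cb, 0) \<in> W" "open V" "homeomorphism W V aug_map H"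
    "\<And>y. y \<in> V \<Longrightarrow> (H has_derivative inv (aug_deriv (D (fst (H y))))) (at y)"
    "\<And>y. y \<in> V \<Longrightarrow> bij (aug_deriv (D (fst (H y))))"
proof -
  define D_aug_map where "D_aug_map q = Blinfun (aug_deriv (D (fst q)))" for q :: "'a \<times> 'a"
  have D_aug_map_apply: "blinfun_apply (D_aug_map q) = aug_deriv (D (fst q))" for q
    by (simp add: D_aug_map_def blinfun_apply_Blinfun_aug_deriv)
  have "1-lipschitz_on UNIV (\<lambda>X. Blinfun (aug_deriv X))"
  proof (rule lipschitz_onI)
    fix X Y :: "'a \<Rightarrow>\<^sub>L 'a"
    have "norm (Blinfun (aug_deriv X) - Blinfun (aug_deriv Y)) \<le> norm (X - Y)"
      by (rule norm_blinfun_bound)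
        (simp_all add: blinfun.diff_left blinfun_apply_Blinfun_aug_deriv norm_aug_deriv_diff_le)
    then show "dist (Blinfun (aug_deriv X)) (Blinfun (aug_deriv Y)) \<le> 1 * dist X Y"
      by (simp add: dist_norm)
  qed simp
  then have "continuous_on UNIV (\<lambda>X. Blinfun (aug_deriv X))" by (rule lipschitz_on_continuous_on)
  moreover have "continuous_on (U \<times> UNIV) (\<lambda>q. D (fst q))"
    by (intro continuous_on_compose2[OF continuous_on_D] continuous_intros) auto
  ultimately have cont: "continuous_on (U \<times> UNIV) D_aug_map"
    unfolding D_aug_map_def by (rule continuous_on_compose2) auto
  obtain g where "linear g" "g \<circ> aug_deriv (D cb) = id"
    using linear_injective_left_inverse[OF linear_aug_deriv inj_aug_deriv_base] by blast
  then have inv: "Blinfun g o\<^sub>L D_aug_map (cb, 0) = id_blinfun"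
    by (intro blinfun_eqI)
      (simp add: D_aug_map_apply pointfree_idE bounded_linear_Blinfun_apply
        linear_conv_bounded_linear)
  have "open (U \<times> (UNIV :: 'a set))" by (simp add: open_Times open_U)
  moreover have "(aug_map has_derivative D_aug_map q) (at q)" if "q \<in> U \<times> UNIV" for q
    using aug_map_has_derivative that by (simp add: D_aug_map_apply mem_Times_iff)
  moreover have "(cb, 0) \<in> U \<times> UNIV" using cb_in_U by simp
  ultimately show ?thesis
  proof (rule inverse_function_theorem[OF _ _ cont _ inv])
    fix W V H H'
    assume W: "open W" "W \<subseteq> U \<times> UNIV" "(cb, 0) \<in> W" "open V" "aug_map (cb, 0) \<in> V"
        "homeomorphism W V aug_map H"
      and H: "\<And>y. y \<in> V \<Longrightarrow> (H has_derivative H' y) (at y)"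
        "\<And>y. y \<in> V \<Longrightarrow> H' y = inv (D_aug_map (H y))" "\<And>y. y \<in> V \<Longrightarrow> bij (D_aug_map (H y))"
    show ?thesis
    proof (rule that[OF W(1-4,6)])
      fix y assume "y \<in> V"
      then show "(H has_derivative inv (aug_deriv (D (fst (H y))))) (at y)"
        "bij (aug_deriv (D (fst (H y))))"
        using H by (simp_all add: D_aug_map_apply)
    qed
  qed
qed

lemma norm_inv_aug_deriv_le:
  assumes m: "m > 0" "\<And>q. m * norm q \<le> norm (aug_deriv (D cb) q)"
    and X: "norm (X - D cb) \<le> m / 2" "bij (aug_deriv X)"
  shows "norm (inv (aug_deriv X) q) \<le> 2 / m * norm q"
proof -
  have "m / 2 * norm q' \<le> norm (aug_deriv X q')" for q'
  proof -
    have "norm (aug_deriv X q' - aug_deriv (D cb) q') \<le> m / 2 * norm q'"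
      using norm_aug_deriv_diff_le[of X q' "D cb"] mult_right_mono[OF X(1) norm_ge_zero[of q']]
      by linarith
    then show ?thesis
      using m(2)[of q'] norm_triangle_ineq2[of "aug_deriv (D cb) q'" "aug_deriv X q'"]
      by (simp add: norm_minus_commute)
  qed
  from this[of "inv (aug_deriv X) q"] have "m / 2 * norm (inv (aug_deriv X) q) \<le> norm q"
    using X(2) by (simp add: bij_is_surj surj_f_inv_f)
  then show ?thesis using m(1) by (simp add: field_simps)
qed

lemma normal_cone_pullback_nonpos:
  assumes c: "c \<in> C" "c \<in> U" and n: "n \<in> normal_cone C c"
    and V: "open V" "aug_map (c, 0) \<in> V"
      "\<And>y. y \<in> V \<Longrightarrow> fst (H y) \<in> U" "\<And>y. y \<in> V \<Longrightarrow> aug_map (H y) = y"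
    and H: "H (aug_map (c, 0)) = (c, 0)" "(H has_derivative S) (at (aug_map (c, 0)))"
    and q: "q \<in> (p -` K) \<times> UNIV"
  shows "n \<bullet> fst (S (q - aug_map (c, 0))) \<le> 0"
proof (rule local_max_on_convex_derivative_nonpos[where g = "\<lambda>y. n \<bullet> fst (H y)"
      and g' = "\<lambda>h. n \<bullet> fst (S h)" and k = "aug_map (c, 0)" and V = V and Q = "(p -` K) \<times> UNIV"])
  show "((\<lambda>y. n \<bullet> fst (H y)) has_derivative (\<lambda>h. n \<bullet> fst (S h))) (at (aug_map (c, 0)))"
    by (intro has_derivative_inner_right has_derivative_fst H(2))
  show "convex ((p -` K) \<times> (UNIV :: 'a set))"
    by (intro convex_Times convex_linear_vimage linear_p convex_K convex_UNIV)
  show "aug_map (c, 0) \<in> (p -` K) \<times> UNIV" using aug_map_mem_iff[of "(c, 0)"] c by simp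
  show "n \<bullet> fst (H y) \<le> n \<bullet> fst (H (aug_map (c, 0)))" if "y \<in> V" "y \<in> (p -` K) \<times> UNIV" for y
  proof -
    have "fst (H y) \<in> C" using aug_map_mem_iff[of "H y"] V(3,4) that by simp
    then show ?thesis using n H(1) by (simp add: normal_cone_def inner_diff_right)
  qed
qed (use V q in auto)

lemma multiplier_of_pullback_nonpos:
  assumes c: "c \<in> C" "c \<in> U"
    and S: "linear S" "\<And>q. S (aug_deriv (D c) q) = q" "\<And>q. norm (S q) \<le> \<beta> * norm q" "\<beta> \<ge> 0"
    and nonpos: "\<And>q. q \<in> (p -` K) \<times> UNIV \<Longrightarrow> n \<bullet> fst (S (q - aug_map (c, 0))) \<le> 0"
  shows "\<exists>\<mu>. (\<forall>y\<in>K. \<mu> \<bullet> y \<le> 0) \<and> (\<forall>d. n \<bullet> d = \<mu> \<bullet> D c d) \<and> norm \<mu> \<le> \<beta> * norm n"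
proof -
  define \<phi> where "\<phi> q = n \<bullet> fst (S q)" for q
  have linear_\<phi>: "linear \<phi>"
    by (rule linearI)
      (simp_all add: \<phi>_def linear_add[OF S(1)] linear_scale[OF S(1)] inner_add_right)
  have k: "aug_map (c, 0) = (\<Xi> c, c - cb)"
    by (simp add: aug_map_def linear_0[OF linear_p] linear_0[OF linear_adjoint_D])
  have \<Xi>c: "\<Xi> c \<in> K" using c C_local by blast
  have \<phi>_snd: "\<phi> (0, e) = 0" for e
  proof -
    have "\<phi> (0, e) \<le> 0" "\<phi> (0, -e) \<le> 0"
      using nonpos[of "aug_map (c, 0) + (0, e)"] nonpos[of "aug_map (c, 0) + (0, -e)"]
        \<Xi>c K_range p_id
      by (auto simp: \<phi>_def k subset_iff)
    moreover have "\<phi> (0, -e) = - \<phi> (0, e)" using linear_neg[OF linear_\<phi>, of "(0, e)"] by simp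
    ultimately show ?thesis by simp
  qed
  define \<mu> where "\<mu> = adjoint (\<lambda>y. \<phi> (y, 0)) 1"
  have "linear (\<lambda>y. \<phi> (y, 0))"
    using linear_add[OF linear_\<phi>, of "(_, 0)" "(_, 0)"] linear_scale[OF linear_\<phi>, of _ "(_, 0)"]
    by (intro linearI) simp_all
  then have \<mu>: "\<mu> \<bullet> y = \<phi> (y, 0)" for y
    using adjoint_works[of "\<lambda>y. \<phi> (y, 0)" y 1] by (simp add: \<mu>_def inner_commute)
  have "\<mu> \<bullet> y \<le> 0" if "y \<in> K" for y
  proof -
    have "\<Xi> c + y \<in> K" using \<Xi>c that convex_K cone_K convex_cone by blast
    then have "aug_map (c, 0) + (y, 0) \<in> (p -` K) \<times> UNIV" using K_range p_id by (auto simp: k)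
    from nonpos[OF this] show ?thesis by (simp add: \<mu> \<phi>_def)
  qed
  moreover have "n \<bullet> d = \<mu> \<bullet> D c d" for d
  proof -
    have "aug_deriv (D c) (d, 0) = (D c d, 0) + (0, d)"
      by (simp add: aug_deriv_def linear_0[OF linear_p] linear_0[OF linear_adjoint_D])
    then have "n \<bullet> d = \<phi> ((D c d, 0) + (0, d))" using S(2)[of "(d, 0)"] by (simp add: \<phi>_def)
    also have "\<dots> = \<phi> (D c d, 0) + \<phi> (0, d)" by (rule linear_add[OF linear_\<phi>])
    finally show ?thesis by (simp add: \<phi>_snd \<mu>)
  qed
  moreover have "norm \<mu> \<le> \<beta> * norm n"
  proof -
    have "norm \<mu> * norm \<mu> = n \<bullet> fst (S (\<mu>, 0))"
      using \<mu>[of \<mu>] by (simp add: \<phi>_def power2_norm_eq_inner[symmetric] power2_eq_square)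
    also have "\<dots> \<le> norm n * norm (fst (S (\<mu>, 0)))" by (rule norm_cauchy_schwarz)
    also have "\<dots> \<le> norm n * norm (S (\<mu>, 0))"
      by (intro mult_left_mono norm_fst_le[of "fst (S (\<mu>, 0))" "snd (S (\<mu>, 0))", simplified]) simp
    also have "\<dots> \<le> norm n * (\<beta> * norm \<mu>)"
      using S(3)[of "(\<mu>, 0)"] by (intro mult_left_mono) (simp_all add: norm_Pair)
    finally have "norm \<mu> * norm \<mu> \<le> (\<beta> * norm n) * norm \<mu>" by (simp add: mult_ac)
    then show ?thesis
      using S(4) by (cases "\<mu> = 0") (simp_all add: mult_le_cancel_right)
  qed
  ultimately show ?thesis by blast
qed

lemma normal_cone_multiplier:
  obtains \<rho> \<beta> where "\<rho> > 0" "\<beta> \<ge> 0"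
    "\<And>c n. c \<in> C \<inter> ball cb \<rho> \<Longrightarrow> n \<in> normal_cone C c \<Longrightarrow>
       \<exists>\<mu>. (\<forall>y\<in>K. \<mu> \<bullet> y \<le> 0) \<and> (\<forall>d. n \<bullet> d = \<mu> \<bullet> D c d) \<and> norm \<mu> \<le> \<beta> * norm n"
proof -
  obtain W V H where W: "open W" "W \<subseteq> U \<times> UNIV" "(cb, 0) \<in> W" and V: "open V"
    and hom: "homeomorphism W V aug_map H"
    and H': "\<And>y. y \<in> V \<Longrightarrow> (H has_derivative inv (aug_deriv (D (fst (H y))))) (at y)"
    and bij: "\<And>y. y \<in> V \<Longrightarrow> bij (aug_deriv (D (fst (H y))))"
    by (rule aug_map_local_inverse) blast
  obtain m where m: "m > 0" "\<And>q. m * norm q \<le> norm (aug_deriv (D cb) q)"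
    using linear_inj_bounded_below_pos[OF linear_aug_deriv inj_aug_deriv_base] by blast
  obtain \<rho> where \<rho>: "\<rho> > 0" "\<And>c. c \<in> ball cb \<rho> \<Longrightarrow> (c, 0) \<in> W \<and> c \<in> U \<and> norm (D c - D cb) \<le> m / 2"
  proof -
    obtain e1 where e1: "e1 > 0" "ball (cb, 0) e1 \<subseteq> W" using W openE by blast
    obtain e2 where e2: "e2 > 0" "ball cb e2 \<subseteq> U" using open_U cb_in_U openE by blast
    have "continuous (at cb) D"
      using continuous_on_D open_U cb_in_U continuous_on_eq_continuous_at by blast
    then obtain e3 where e3: "e3 > 0" "\<And>y. dist y cb < e3 \<Longrightarrow> dist (D y) (D cb) < m / 2"
      using m(1) unfolding continuous_at_eps_delta by (meson half_gt_zero)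
    show ?thesis
    proof (rule that[of "min e1 (min e2 e3)"])
      fix c assume "c \<in> ball cb (min e1 (min e2 e3))"
      then show "(c, 0) \<in> W \<and> c \<in> U \<and> norm (D c - D cb) \<le> m / 2"
        using e1 e2 e3 by (auto simp: dist_Pair_Pair dist_commute dist_norm less_imp_le subset_iff)
    qed (use e1 e2 e3 in auto)
  qed
  show ?thesis
  proof (rule that[OF \<rho>(1), of "2 / m"])
    show "0 \<le> 2 / m" using m by simp
    fix c n assume c: "c \<in> C \<inter> ball cb \<rho>" and n: "n \<in> normal_cone C c"
    have cW: "(c, 0) \<in> W" and cU: "c \<in> U" and Dc: "norm (D c - D cb) \<le> m / 2"
      using \<rho>(2) c by auto
    have kV: "aug_map (c, 0) \<in> V" and Hk: "H (aug_map (c, 0)) = (c, 0)"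
      using hom cW unfolding homeomorphism_def by auto
    have HV: "fst (H y) \<in> U" "aug_map (H y) = y" if "y \<in> V" for y
      using hom W(2) that unfolding homeomorphism_def by (auto simp: mem_Times_iff)
    define S where "S = inv (aug_deriv (D c))"
    have bij_c: "bij (aug_deriv (D c))" using bij[OF kV] Hk by simp
    have S_left: "S (aug_deriv (D c) q) = q" for q
      using bij_c by (simp add: S_def bij_is_inj inv_f_f)
    have S_bound: "norm (S q) \<le> 2 / m * norm q" for q
      unfolding S_def using norm_inv_aug_deriv_le[OF m Dc bij_c] .
    have H_S: "(H has_derivative S) (at (aug_map (c, 0)))" using H'[OF kV] Hk by (simp add: S_def)
    show "\<exists>\<mu>. (\<forall>y\<in>K. \<mu> \<bullet> y \<le> 0) \<and> (\<forall>d. n \<bullet> d = \<mu> \<bullet> D c d) \<and> norm \<mu> \<le> 2 / m * norm n"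
    proof (rule multiplier_of_pullback_nonpos)
      show "linear S" using H_S has_derivative_linear by blast
      show "n \<bullet> fst (S (q - aug_map (c, 0))) \<le> 0" if "q \<in> (p -` K) \<times> UNIV" for q
        using c cU n V kV HV Hk H_S that by (intro normal_cone_pullback_nonpos) auto
    qed (use c cU S_left S_bound m(1) in auto)
  qed
qed

lemma adjoint_mem_normal_cone_base:
  assumes "\<forall>y\<in>K. \<mu> \<bullet> y \<le> 0"
  shows "adjoint (D cb) \<mu> \<in> normal_cone C cb"
  unfolding normal_cone_def
proof safe
  fix c' assume "c' \<in> C"
  have "\<mu> \<bullet> D cb (c' - cb) \<le> 0"
  proof (rule local_max_on_convex_derivative_nonpos[where g = "\<lambda>y. \<mu> \<bullet> \<Xi> y" and V = U and Q = C])
    show "((\<lambda>y. \<mu> \<bullet> \<Xi> y) has_derivative (\<lambda>h. \<mu> \<bullet> D cb h)) (at cb)"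
      by (intro has_derivative_inner_right has_derivative_\<Xi> cb_in_U)
    show "\<mu> \<bullet> \<Xi> y \<le> \<mu> \<bullet> \<Xi> cb" if "y \<in> U" "y \<in> C" for y
      using assms C_local that by (auto simp: \<Xi>_cb)
  qed (use open_U cb_in_U convex_C cb_in_C \<open>c' \<in> C\<close> in auto)
  then show "adjoint (D cb) \<mu> \<bullet> (c' - cb) \<le> 0"
    by (simp add: inner_commute inner_adjoint_D)
qed

lemma normal_cone_estimate:
  assumes "r > 0" "M \<ge> 0"
    and lipschitz_D: "\<And>y. y \<in> ball cb r \<Longrightarrow> norm (D y - D cb) \<le> M * norm (y - cb)"
  obtains \<rho> \<kappa> where "\<rho> > 0" "\<kappa> \<ge> 0"
    "\<And>c n. c \<in> C \<inter> ball cb \<rho> \<Longrightarrow> n \<in> normal_cone C c \<Longrightarrow>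
       \<exists>w\<in>normal_cone C cb. norm (w - n) \<le> \<kappa> * norm n * norm (c - cb)"
proof -
  obtain \<rho> \<beta> where \<rho>: "\<rho> > 0" "\<beta> \<ge> 0" and multiplier: "\<And>c n. c \<in> C \<inter> ball cb \<rho> \<Longrightarrow>
      n \<in> normal_cone C c \<Longrightarrow>
      \<exists>\<mu>. (\<forall>y\<in>K. \<mu> \<bullet> y \<le> 0) \<and> (\<forall>d. n \<bullet> d = \<mu> \<bullet> D c d) \<and> norm \<mu> \<le> \<beta> * norm n"
    by (rule normal_cone_multiplier) blast
  show ?thesis
  proof (rule that[of "min \<rho> r" "\<beta> * M"])
    fix c n assume c: "c \<in> C \<inter> ball cb (min \<rho> r)" and n: "n \<in> normal_cone C c"
    then obtain \<mu> where \<mu>: "\<forall>y\<in>K. \<mu> \<bullet> y \<le> 0" "\<And>d. n \<bullet> d = \<mu> \<bullet> D c d" "norm \<mu> \<le> \<beta> * norm n"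
      using multiplier[of c n] by auto
    define w where "w = adjoint (D cb) \<mu>"
    have w: "w \<bullet> d = \<mu> \<bullet> D cb d" for d
      by (simp add: w_def inner_commute inner_adjoint_D)
    have "norm (w - n) * norm (w - n) = \<mu> \<bullet> (D cb - D c) (w - n)"
      by (simp add: power2_eq_square[symmetric] power2_norm_eq_inner inner_diff_left
          w \<mu>(2) blinfun.diff_left blinfun.diff_right inner_diff_right)
    also have "\<dots> \<le> norm \<mu> * norm ((D cb - D c) (w - n))" by (rule norm_cauchy_schwarz)
    also have "\<dots> \<le> (\<beta> * norm n) * (M * norm (c - cb) * norm (w - n))"
    proof (intro mult_mono)
      have "norm ((D cb - D c) (w - n)) \<le> norm (D cb - D c) * norm (w - n)" by (rule norm_blinfun)
      also have "\<dots> \<le> M * norm (c - cb) * norm (w - n)"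
        using lipschitz_D[of c] c by (intro mult_right_mono) (auto simp: norm_minus_commute)
      finally show "norm ((D cb - D c) (w - n)) \<le> M * norm (c - cb) * norm (w - n)" .
    qed (use \<mu>(3) \<rho>(2) in auto)
    finally have "norm (w - n) * norm (w - n) \<le> (\<beta> * M * norm n * norm (c - cb)) * norm (w - n)"
      by (simp add: mult_ac)
    then have "norm (w - n) \<le> \<beta> * M * norm n * norm (c - cb)"
      using \<rho>(2) assms(2) by (cases "w = n") (simp_all add: mult_le_cancel_right)
    moreover have "w \<in> normal_cone C cb"
      unfolding w_def by (rule adjoint_mem_normal_cone_base[OF \<mu>(1)])
    ultimately show "\<exists>w\<in>normal_cone C cb. norm (w - n) \<le> \<beta> * M * norm n * norm (c - cb)" by blast
  qed (use \<rho> assms in auto)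
qed

end

lemma graph_point_norm_diff_le:
  assumes f: "proper_fun f" and \<epsilon>: "\<epsilon> > 0" "ball xbar \<epsilon> \<subseteq> dom_f f"
    and L: "L-lipschitz_on (ball xbar \<epsilon>) (\<lambda>y. real_of_ereal (f y))"
    and "f xbar = ereal rb" and x: "x \<in> ball xbar \<epsilon>"
  obtains r where "f x = ereal r" "norm ((x, r) - (xbar, rb)) \<le> (1 + L) * dist x xbar"
proof -
  have "f x \<noteq> \<infinity>" "f x \<noteq> -\<infinity>" using x \<epsilon>(2) f by (auto simp: dom_f_def proper_fun_def)
  then obtain r where r: "f x = ereal r" by (cases "f x") auto
  have "\<bar>r - rb\<bar> \<le> L * dist x xbar"
    using lipschitz_onD[OF L x, of xbar] \<epsilon>(1) by (simp add: r \<open>f xbar = ereal rb\<close> dist_real_def)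
  then have "norm ((x, r) - (xbar, rb)) \<le> (1 + L) * dist x xbar"
    using norm_Pair_le[of "x - xbar" "r - rb"] by (simp add: dist_norm algebra_simps)
  with r show ?thesis by (rule that)
qed

lemma calm_subdiff_of_normal_cone_epi_estimate:
  fixes f :: "'a::euclidean_space \<Rightarrow> ereal"
  assumes f: "proper_fun f" "locally_lipschitz_on_dom f" "f xbar = ereal rb"
    and ubar: "ubar \<in> subdiff f xbar"
    and est: "\<rho> > 0" "\<kappa> \<ge> 0"
      "\<And>c n. c \<in> epi f \<inter> ball (xbar, rb) \<rho> \<Longrightarrow> n \<in> normal_cone (epi f) c \<Longrightarrow>
         \<exists>w\<in>normal_cone (epi f) (xbar, rb). norm (w - n) \<le> \<kappa> * norm n * norm (c - (xbar, rb))"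
  shows "calm_at (subdiff f) xbar ubar"
proof -
  have "xbar \<in> dom_f f" using f(3) by (simp add: dom_f_def)
  then obtain \<epsilon>0 L where \<epsilon>0: "\<epsilon>0 > 0" "ball xbar \<epsilon>0 \<subseteq> dom_f f"
    and L: "L-lipschitz_on (ball xbar \<epsilon>0) (\<lambda>y. real_of_ereal (f y))"
    using f(2) unfolding locally_lipschitz_on_dom_def by blast
  have L0: "L \<ge> 0" using L lipschitz_on_nonneg by blast
  define N where "N = norm ubar + 1"
  define \<kappa>1 where "\<kappa>1 = \<kappa> * (N + 1) * (1 + L)"
  define \<epsilon> where "\<epsilon> = min (\<epsilon>0 / 2) (min (\<rho> / (2 * (1 + L))) (1 / (2 * (\<kappa>1 + 1))))"
  have \<kappa>1: "\<kappa>1 \<ge> 0" using est(2) L0 by (simp add: \<kappa>1_def N_def)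
  have \<epsilon>: "\<epsilon> > 0" using \<epsilon>0 est(1) L0 \<kappa>1 by (simp add: \<epsilon>_def)
  have "u \<in> {s + t |s t. s \<in> subdiff f xbar \<and> norm t \<le> 2 * (N + 1) * \<kappa>1 * dist x xbar}"
    if x: "dist x xbar \<le> \<epsilon>" and u: "u \<in> subdiff f x" "dist ubar u \<le> 1" for x u
  proof -
    have "x \<in> ball xbar \<epsilon>0" using x \<epsilon>0 by (simp add: \<epsilon>_def dist_commute)
    then obtain r where r: "f x = ereal r"
      and c: "norm ((x, r) - (xbar, rb)) \<le> (1 + L) * dist x xbar"
      by (rule graph_point_norm_diff_le[OF f(1) \<epsilon>0 L f(3)])
    note c
    also have "\<dots> \<le> (1 + L) * (\<rho> / (2 * (1 + L)))"
      using x L0 by (intro mult_left_mono) (auto simp: \<epsilon>_def)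
    also have "\<dots> < \<rho>" using L0 est(1) by (simp add: field_simps add_pos_nonneg)
    finally have "dist (x, r) (xbar, rb) < \<rho>" by (simp only: dist_norm)
    then have "(x, r) \<in> epi f \<inter> ball (xbar, rb) \<rho>" by (simp add: epi_def r dist_commute)
    then obtain w where w: "w \<in> normal_cone (epi f) (xbar, rb)"
      "norm (w - (u, -1)) \<le> \<kappa> * norm (u, -1::real) * norm ((x, r) - (xbar, rb))"
      using est(3) subdiff_imp_normal_cone_epi[OF u(1) r] by blast
    have norm_u: "norm u \<le> N"
      using u(2) norm_triangle_sub[of u ubar] by (simp add: N_def dist_norm norm_minus_commute)
    have "norm (w - (u, -1)) \<le> \<kappa>1 * dist x xbar"
    proof -
      have "norm (u, -1::real) \<le> N + 1" using norm_Pair_le[of u "-1::real"] norm_u by simp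
      then have "\<kappa> * norm (u, -1::real) * norm ((x, r) - (xbar, rb))
          \<le> \<kappa> * (N + 1) * ((1 + L) * dist x xbar)"
        using c est(2) by (intro mult_mono mult_left_mono) (auto simp: N_def)
      with w(2) show ?thesis by (simp add: \<kappa>1_def mult_ac)
    qed
    moreover have "\<kappa>1 * dist x xbar \<le> 1/2"
    proof -
      have "\<kappa>1 * dist x xbar \<le> \<kappa>1 * (1 / (2 * (\<kappa>1 + 1)))"
        using x \<kappa>1 by (intro mult_left_mono) (auto simp: \<epsilon>_def)
      also have "\<dots> \<le> 1/2" using \<kappa>1 by (simp add: field_simps)
      finally show ?thesis .
    qed
    ultimately obtain v where "v \<in> subdiff f xbar"
      "norm (u - v) \<le> 2 * (norm u + 1) * (\<kappa>1 * dist x xbar)"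
      using subdiff_near_normal_cone_epi[OF f(1,3) w(1)] by blast
    moreover have "2 * (norm u + 1) * (\<kappa>1 * dist x xbar) \<le> 2 * (N + 1) * \<kappa>1 * dist x xbar"
      using norm_u \<kappa>1 by (simp add: mult.assoc mult_right_mono)
    ultimately show ?thesis by (intro CollectI exI[of _ v] exI[of _ "u - v"]) auto
  qed
  then show ?thesis
    unfolding calm_at_def using ubar \<epsilon> \<kappa>1
    by (intro conjI exI[of _ "2 * (N + 1) * \<kappa>1"] exI[of _ \<epsilon>] exI[of _ 1])
      (auto simp: dist_commute N_def)
qed

theorem proposition2p4:
  fixes f :: "'a::euclidean_space \<Rightarrow> ereal" and xbar ubar :: 'a
  assumes "proper_fun f" and "convex_fun f"
    and "C2_cone_reducible_fun f"
    and "locally_lipschitz_on_dom f"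
    and "xbar \<in> dom_f f" and "ubar \<in> subdiff f xbar"
  shows "calm_at (subdiff f) xbar ubar"
proof -
  define rb where "rb = real_of_ereal (f xbar)"
  have f_xbar: "f xbar = ereal rb"
    using assms(1,5) by (cases "f xbar") (auto simp: rb_def proper_fun_def dom_f_def)
  have "C2_cone_reducible_at (epi f) (xbar, rb)"
    using assms(3,5) by (simp add: C2_cone_reducible_fun_def rb_def)
  then obtain U L K and \<Xi> :: "'a \<times> real \<Rightarrow> 'a \<times> real" where red:
    "open U" "(xbar, rb) \<in> U" "subspace L" "\<Xi> ` U \<subseteq> L" "K \<subseteq> L" "C2_on U \<Xi>"
    "range (frechet_derivative \<Xi> (at (xbar, rb))) = L" "epi f \<inter> U = {y \<in> U. \<Xi> y \<in> K}"
    "\<Xi> (xbar, rb) = 0" "convex K" "cone K"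
    unfolding C2_cone_reducible_at_def by blast
  obtain D r M where D: "\<And>y. y \<in> U \<Longrightarrow> (\<Xi> has_derivative blinfun_apply (D y)) (at y)"
      "continuous_on U D"
    and lipschitz_D: "r > 0" "M \<ge> 0"
      "\<And>y. y \<in> ball (xbar, rb) r \<Longrightarrow> norm (D y - D (xbar, rb)) \<le> M * norm (y - (xbar, rb))"
    by (rule C2_on_derivative_locally_lipschitz[OF red(6,1,2)]) blast
  have "range (D (xbar, rb)) = L"
    using red(7) frechet_derivative_at[OF D(1)[OF red(2)]] by simp
  moreover obtain p where "linear p" "\<And>y. p y \<in> L" "\<And>y. y \<in> L \<Longrightarrow> p y = y"
    by (rule subspace_linear_projection_exists[OF red(3)]) blast
  moreover have "(xbar, rb) \<in> epi f" using f_xbar by (simp add: epi_def)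
  ultimately interpret C2_cone_reduction "epi f" "(xbar, rb)" U K \<Xi> D p
    using assms(2) red D by (intro C2_cone_reduction.intro) (auto simp: convex_fun_def)
  obtain \<rho> \<kappa> where est: "\<rho> > 0" "\<kappa> \<ge> 0"
    "\<And>c n. c \<in> epi f \<inter> ball (xbar, rb) \<rho> \<Longrightarrow> n \<in> normal_cone (epi f) c \<Longrightarrow>
       \<exists>w\<in>normal_cone (epi f) (xbar, rb). norm (w - n) \<le> \<kappa> * norm n * norm (c - (xbar, rb))"
    using normal_cone_estimate[OF lipschitz_D] by metis
  show ?thesis by (rule calm_subdiff_of_normal_cone_epi_estimate[OF assms(1,4) f_xbar assms(6) est])
qed

end
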